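(* Let $\mathbb{X}\subset\mathbb{R}^n$ be a Lebesgue-measurable compact set and let $f:\mathbb{R}^n\to\mathbb{R}$ be positive homogeneous with $f|_{\mathbb{X}}$ Lebesgue integrable. Then for every $\epsilon>0$ there exists a finite-layer feed-forward ReLU neural network (with biases) $\mathcal{A}$ of width at most $n+4$, representing $\mathcal{F}_{\mathcal A}$, such that $$\int_{\mathbb{X}}\Big|\,|x|\,\mathcal{F}_{\mathcal A}\big(x/|x|\big)-f(x)\Big|\,dx<\epsilon .$$
   Context: $|\cdot|$ denotes the $\ell^1$ norm on $\mathbb{R}^n$ (the integrand is defined for $x\neq0$; the point $0$ has measure zero). A function $g$ is positive homogeneous iff $g(\lambda x)=\lambda g(x)$ for all $x$ and all $\lambda>0$. The width of a feed-forward network is the maximal number of neurons in a hidden layer. *)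

theory Defs
  imports "HOL-Analysis.Analysis"
begin

definition l1norm :: "real^'n \<Rightarrow> real" where
  "l1norm x = (\<Sum>i\<in>UNIV. \<bar>x $ i\<bar>)"

definition pos_homogeneous :: "(real^'n \<Rightarrow> real) \<Rightarrow> bool" where
  "pos_homogeneous g \<longleftrightarrow> (\<forall>x. \<forall>c::real. c > 0 \<longrightarrow> g (c *\<^sub>R x) = c * g x)"

definition relu :: "real \<Rightarrow> real" where
  "relu t = max 0 t"

text \<open>The first layer is given by a list of
  weight rows in real^'n and a list of biases (one neuron per row); each further
  layer is given by a list of weight rows (real lists) and biases. ReLU is applied
  after every layer except the last; the last layer must have exactly one neuron
  (scalar output, affine, no activation).\<close>
type_synonym 'n first_layer = "(real^'n) list \<times> real list"
type_synonym layer = "real list list \<times> real list"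
type_synonym 'n relu_net = "'n first_layer \<times> layer list"

definition affine_first :: "'n first_layer \<Rightarrow> real^'n \<Rightarrow> real list" where
  "affine_first L x = map2 (\<lambda>w c. w \<bullet> x + c) (fst L) (snd L)"

definition affine :: "layer \<Rightarrow> real list \<Rightarrow> real list" where
  "affine L v = map2 (\<lambda>w c. sum_list (map2 (*) w v) + c) (fst L) (snd L)"

text \<open>\<open>run Ls v\<close>: v is the pre-activation of the previous layer.\<close>
fun run :: "layer list \<Rightarrow> real list \<Rightarrow> real list" where
  "run [] v = v"
| "run (L # Ls) v = run Ls (affine L (map relu v))"

fun valid_layers :: "nat \<Rightarrow> layer list \<Rightarrow> bool" where
  "valid_layers d [] \<longleftrightarrow> d = 1"
| "valid_layers d (L # Ls) \<longleftrightarrow>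
     (\<forall>w\<in>set (fst L). length w = d) \<and> length (fst L) = length (snd L)
     \<and> valid_layers (length (fst L)) Ls"

definition valid_net :: "'n relu_net \<Rightarrow> bool" where
  "valid_net N \<longleftrightarrow> length (fst (fst N)) = length (snd (fst N))
                   \<and> valid_layers (length (fst (fst N))) (snd N)"

definition net_fun :: "'n relu_net \<Rightarrow> real^'n \<Rightarrow> real" where
  "net_fun N x = hd (run (snd N) (affine_first (fst N) x))"

text \<open>Numbers of neurons of all layers; the hidden layers are all but the last.\<close>
definition layer_sizes :: "'n relu_net \<Rightarrow> nat list" where
  "layer_sizes N = length (fst (fst N)) # map (\<lambda>L. length (fst L)) (snd N)"

definition net_width :: "'n relu_net \<Rightarrow> nat" where
  "net_width N = Max (insert 0 (set (butlast (layer_sizes N))))"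

end

theory Submission
  imports Defs
begin

text \<open>On \<open>X\<close> write \<open>f x = |x| F x\<close> with \<open>F x = f x / |x|\<close>; by homogeneity \<open>F\<close> is invariant under
  \<open>x \<mapsto> t x\<close>, and the error integral becomes the \<open>L\<^sup>1\<close> distance between \<open>F\<close> and
  \<open>F\<^sub>\<A> (x / |x|)\<close> for the measure with density \<open>|x|\<close> on \<open>X\<close>. Approximating \<open>F\<close> by
  dyadic step functions, it suffices to approximate indicators of its level sets, which are cones
  relative to \<open>X\<close>. Up to a set of small measure (inner approximation by a closed set) such a cone
  is the preimage of a compact set of directions under \<open>x \<mapsto> x / |x|\<close>, and by a Dynkin
  argument it suffices to treat preimages of open boxes. The indicator of a box is the pointwise
  limit of trapezoidal bumps, built from the clamps \<open>min 1 (max 0 t) = relu (1 - relu (1 - t))\<close>,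
  and a linear combination of bumps is computed by a ReLU network that carries its \<open>n\<close> inputs
  unchanged and needs only four further neurons in each layer.\<close>

section \<open>Bump functions\<close>

lemma relu_nonneg: "0 \<le> relu t"
  by (simp add: relu_def)

lemma relu_of_nonneg: "0 \<le> t \<Longrightarrow> relu t = t"
  by (simp add: relu_def)

lemma continuous_on_relu [continuous_intros]:
  "continuous_on S g \<Longrightarrow> continuous_on S (\<lambda>x. relu (g x))"
  unfolding relu_def by (intro continuous_intros)

definition clamp01 :: "real \<Rightarrow> real" where
  "clamp01 t = min 1 (max 0 t)"

lemma clamp01_eq_relu: "clamp01 t = relu (1 - relu (1 - t))"
  by (simp add: clamp01_def relu_def)

lemma clamp01_nonneg: "0 \<le> clamp01 t"
  by (simp add: clamp01_def)

lemma clamp01_le_1: "clamp01 t \<le> 1"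
  by (simp add: clamp01_def)

lemma clamp01_eq_0: "t \<le> 0 \<Longrightarrow> clamp01 t = 0"
  by (simp add: clamp01_def)

lemma clamp01_eq_1: "1 \<le> t \<Longrightarrow> clamp01 t = 1"
  by (simp add: clamp01_def)

lemma continuous_on_clamp01 [continuous_intros]:
  "continuous_on S g \<Longrightarrow> continuous_on S (\<lambda>x. clamp01 (g x))"
  unfolding clamp01_def by (intro continuous_intros)

definition box_bump :: "'a::euclidean_space \<Rightarrow> 'a \<Rightarrow> real \<Rightarrow> 'a \<Rightarrow> real" where
  "box_bump a b K y =
    relu ((\<Sum>i\<in>Basis. clamp01 (K * (y \<bullet> i - a \<bullet> i)) + clamp01 (K * (b \<bullet> i - y \<bullet> i)))
          - (2 * real DIM('a) - 1))"

lemma box_bump_nonneg: "0 \<le> box_bump a b K y"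
  by (simp add: box_bump_def relu_nonneg)

lemma box_bump_le_1: "box_bump a b K (y :: 'a::euclidean_space) \<le> 1"
proof -
  have "(\<Sum>i\<in>(Basis :: 'a set). clamp01 (K * (y \<bullet> i - a \<bullet> i)) + clamp01 (K * (b \<bullet> i - y \<bullet> i)))
      \<le> (\<Sum>i\<in>(Basis :: 'a set). 2)"
    by (intro sum_mono) (simp add: add_mono[OF clamp01_le_1 clamp01_le_1, simplified])
  then show ?thesis
    by (simp add: box_bump_def relu_def)
qed

lemma box_bump_eq_0:
  fixes y :: "'a::euclidean_space"
  assumes "y \<notin> box a b" "0 \<le> K"
  shows "box_bump a b K y = 0"
proof -
  define h where "h i = clamp01 (K * (y \<bullet> i - a \<bullet> i)) + clamp01 (K * (b \<bullet> i - y \<bullet> i))" for i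
  obtain i where i: "i \<in> Basis" "y \<bullet> i \<le> a \<bullet> i \<or> b \<bullet> i \<le> y \<bullet> i"
    using assms(1) by (auto simp: mem_box not_less)
  have "h i \<le> 1"
    using i assms(2) by (auto simp: h_def clamp01_eq_0 clamp01_le_1 mult_nonneg_nonpos)
  moreover have "h j \<le> 2" for j
    by (simp add: h_def add_mono[OF clamp01_le_1 clamp01_le_1, simplified])
  moreover have "(\<Sum>j\<in>Basis. h j) = h i + (\<Sum>j\<in>Basis - {i}. h j)"
    using i by (simp add: sum.remove)
  ultimately have "(\<Sum>j\<in>Basis. h j) \<le> 1 + (\<Sum>j\<in>(Basis :: 'a set) - {i}. 2)"
    by (metis add_mono sum_mono)
  also have "\<dots> = 2 * real DIM('a) - 1"
    using i by (simp add: card_Diff_singleton of_nat_diff algebra_simps)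
  finally show ?thesis
    by (simp add: box_bump_def relu_def h_def)
qed

lemma box_bump_eq_1:
  assumes "\<And>i. i \<in> Basis \<Longrightarrow> 1 \<le> K * (y \<bullet> i - a \<bullet> i) \<and> 1 \<le> K * (b \<bullet> i - y \<bullet> i)"
  shows "box_bump a b K (y :: 'a::euclidean_space) = 1"
proof -
  have "(\<Sum>i\<in>(Basis :: 'a set). clamp01 (K * (y \<bullet> i - a \<bullet> i)) + clamp01 (K * (b \<bullet> i - y \<bullet> i)))
      = (\<Sum>i\<in>(Basis :: 'a set). 2)"
    by (intro sum.cong refl) (simp add: assms clamp01_eq_1)
  then show ?thesis
    by (simp add: box_bump_def relu_def)
qed

lemma box_bump_tendsto_indicator:
  fixes y :: "'a::euclidean_space"
  shows "(\<lambda>k. box_bump a b (real k) y) \<longlonglongrightarrow> indicator (box a b) y"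
proof (cases "y \<in> box a b")
  case True
  define m where "m = Min ((\<lambda>i. min (y \<bullet> i - a \<bullet> i) (b \<bullet> i - y \<bullet> i)) ` (Basis :: 'a set))"
  have m_pos: "0 < m"
    using True by (auto simp: m_def mem_box)
  have m_le: "m \<le> y \<bullet> i - a \<bullet> i" "m \<le> b \<bullet> i - y \<bullet> i" if "i \<in> Basis" for i
    using that by (auto simp: m_def intro!: Min_le_iff[THEN iffD2] bexI[where x = i])
  have "box_bump a b (real k) y = 1" if "1 / m \<le> real k" for k
  proof (rule box_bump_eq_1)
    have "1 \<le> real k * t" if "m \<le> t" for t
    proof -
      have "1 = (1 / m) * m"
        using m_pos by simp
      also have "\<dots> \<le> real k * t"
        using \<open>1 / m \<le> real k\<close> that m_pos by (intro mult_mono) auto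
      finally show ?thesis .
    qed
    then show "1 \<le> real k * (y \<bullet> i - a \<bullet> i) \<and> 1 \<le> real k * (b \<bullet> i - y \<bullet> i)" if "i \<in> Basis" for i
      using m_le[OF that] by blast
  qed
  moreover have "1 / m \<le> real k" if "nat \<lceil>1 / m\<rceil> \<le> k" for k
    using that by (metis of_nat_mono real_nat_ceiling_ge order_trans)
  ultimately have "\<forall>\<^sub>F k in sequentially. box_bump a b (real k) y = indicator (box a b) y"
    using True by (auto intro!: eventually_sequentiallyI[of "nat \<lceil>1 / m\<rceil>"])
  then show ?thesis
    by (rule tendsto_eventually)
next
  case False
  then show ?thesis
    by (simp add: box_bump_eq_0)
qed

lemma continuous_on_box_bump: "continuous_on S (box_bump a b K)"
  unfolding box_bump_def by (intro continuous_intros)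

lemma continuous_on_sum_list [continuous_intros]:
  fixes h :: "'a \<Rightarrow> 'b::topological_space \<Rightarrow> 'c::topological_monoid_add"
  shows "(\<And>x. x \<in> set xs \<Longrightarrow> continuous_on S (h x)) \<Longrightarrow> continuous_on S (\<lambda>y. \<Sum>x\<leftarrow>xs. h x y)"
  by (induction xs) (auto intro!: continuous_on_add)

definition bump_comb :: "(real \<times> 'a \<times> 'a \<times> real) list \<Rightarrow> 'a::euclidean_space \<Rightarrow> real" where
  "bump_comb gs y = (\<Sum>(c, a, b, K)\<leftarrow>gs. c * box_bump a b K y)"

lemma continuous_on_bump_comb: "continuous_on S (bump_comb gs)"
  unfolding bump_comb_def
  by (intro continuous_intros) (auto intro!: continuous_intros continuous_on_box_bump split: prod.splits)

lemma bump_comb_append: "bump_comb (gs @ hs) y = bump_comb gs y + bump_comb hs y"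
  by (simp add: bump_comb_def)

lemma bump_comb_scale: "bump_comb (map (\<lambda>(c, a, b, K). (t * c, a, b, K)) gs) y = t * bump_comb gs y"
  by (induction gs) (auto simp: bump_comb_def algebra_simps)

section \<open>ReLU networks of width \<open>n + 4\<close>\<close>

lemma map_relu_of_nonneg: "\<forall>t\<in>set ts. 0 \<le> t \<Longrightarrow> map relu ts = ts"
  by (induction ts) (auto simp: relu_of_nonneg)

definition list_dot :: "real list \<Rightarrow> real list \<Rightarrow> real" where
  "list_dot u v = sum_list (map2 (*) u v)"

lemma list_dot_append:
  "length u1 = length v1 \<Longrightarrow> list_dot (u1 @ u2) (v1 @ v2) = list_dot u1 v1 + list_dot u2 v2"
  by (simp add: list_dot_def)

lemma list_dot_4: "list_dot [a1, a2, a3, a4] [b1, b2, b3, b4] = a1 * b1 + a2 * b2 + a3 * b3 + a4 * b4"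
  by (simp add: list_dot_def)

lemma list_dot_update_replicate_0:
  assumes "j < length v"
  shows "list_dot ((replicate (length v) 0)[j := g]) v = g * v ! j"
proof -
  have "list_dot ((replicate (length v) 0)[j := g]) v
      = (\<Sum>k<length v. (replicate (length v) 0)[j := g] ! k * v ! k)"
    by (simp add: list_dot_def sum_list_sum_nth atLeast0LessThan)
  also have "\<dots> = (\<Sum>k<length v. if k = j then g * v ! j else 0)"
    by (rule sum.cong) (auto simp: nth_list_update)
  finally show ?thesis
    using assms by simp
qed

lemma list_dot_replicate_0: "list_dot (replicate n 0) v = 0"
proof (induction n arbitrary: v)
  case (Suc n)
  then show ?case by (cases v) (auto simp: list_dot_def)
qed (simp add: list_dot_def)

lemma list_dot_replicate_0_append:
  "length cs = n \<Longrightarrow> list_dot (replicate n 0 @ q) (cs @ r) = list_dot q r"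
  by (simp add: list_dot_append list_dot_replicate_0)

lemma affine_eq_map_list_dot: "affine L v = map2 (\<lambda>w c. list_dot w v + c) (fst L) (snd L)"
  by (simp add: affine_def list_dot_def)

text \<open>The networks below act on states \<open>cs @ [A, B, L, W]\<close> of \<open>n + 4\<close> neurons. The first \<open>n\<close>
  neurons hold the nonnegative numbers \<open>y \<bullet> i + 1\<close>, which every ReLU passes on unchanged;
  \<open>A\<close> and \<open>B\<close> accumulate the output, \<open>L\<close> accumulates ramps and \<open>W\<close> is scratch space.\<close>
definition carry_layer :: "nat \<Rightarrow> real list \<Rightarrow> real list \<Rightarrow> real list \<Rightarrow> real list \<Rightarrow> real list \<Rightarrow> real \<Rightarrow> layer"
  where "carry_layer n p qA qB qL qW b =
    (map (\<lambda>j. (replicate (n + 4) 0)[j := 1]) [0..<n] @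
       [replicate n 0 @ qA, replicate n 0 @ qB, replicate n 0 @ qL, p @ qW],
     replicate n 0 @ [0, 0, 0, b])"

lemma affine_carry_layer:
  assumes "length cs = n" "length p = n" "length r = 4"
  shows "affine (carry_layer n p qA qB qL qW b) (cs @ r) =
     cs @ [list_dot qA r, list_dot qB r, list_dot qL r, list_dot p cs + list_dot qW r + b]"
proof -
  have "map2 (\<lambda>w c. list_dot w (cs @ r) + c) (map (\<lambda>j. (replicate (n + 4) 0)[j := 1]) [0..<n])
      (replicate n 0) = cs" (is "?identity_rows = _")
  proof (rule nth_equalityI)
    fix i assume "i < length ?identity_rows"
    then show "?identity_rows ! i = cs ! i"
      using assms list_dot_update_replicate_0[of i "cs @ r" 1] by (simp add: nth_append)
  qed (use assms in simp)
  then show ?thesis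
    using assms by (simp add: carry_layer_def affine_eq_map_list_dot
        list_dot_replicate_0_append list_dot_append list_dot_replicate_0)
qed

lemma run_carry_layer:
  assumes "length cs = n" "length p = n" "\<forall>c\<in>set cs. 0 \<le> c"
    "length qA = 4" "length qB = 4" "length qL = 4" "length qW = 4"
  shows "run (carry_layer n p qA qB qL qW b # Ls) (cs @ [A, B, L, W]) =
    run Ls (cs @ [list_dot qA [relu A, relu B, relu L, relu W], list_dot qB [relu A, relu B, relu L, relu W],
                  list_dot qL [relu A, relu B, relu L, relu W],
                  list_dot p cs + list_dot qW [relu A, relu B, relu L, relu W] + b])"
  using assms by (simp add: map_relu_of_nonneg affine_carry_layer)

definition ramp_layers :: "nat \<Rightarrow> nat \<Rightarrow> real \<Rightarrow> real \<Rightarrow> layer list" where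
  "ramp_layers n j g d =
    [carry_layer n ((replicate n 0)[j := - g]) [1, 0, 0, 0] [0, 1, 0, 0] [0, 0, 1, 0] [0, 0, 0, 0] (1 - d),
     carry_layer n (replicate n 0) [1, 0, 0, 0] [0, 1, 0, 0] [0, 0, 1, 0] [0, 0, 0, -1] 1,
     carry_layer n (replicate n 0) [1, 0, 0, 0] [0, 1, 0, 0] [0, 0, 1, 1] [0, 0, 0, 0] 0]"

lemma run_ramp_layers:
  assumes "length cs = n" "j < n" "\<forall>c\<in>set cs. 0 \<le> c" "0 \<le> A" "0 \<le> B" "0 \<le> L"
  shows "run (ramp_layers n j g d @ Ls) (cs @ [A, B, L, W]) =
    run Ls (cs @ [A, B, L + clamp01 (g * cs ! j + d), 0])"
proof -
  have "list_dot ((replicate n 0)[j := - g]) cs = - g * cs ! j"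
    using list_dot_update_replicate_0[of j cs "- g"] assms by simp
  then show ?thesis
    using assms by (simp del: run.simps add: ramp_layers_def run_carry_layer list_dot_replicate_0
        list_dot_4 relu_of_nonneg relu_nonneg clamp01_eq_relu diff_diff_eq add.commute)
qed

lemma run_concat_accumulate:
  assumes "\<And>j L Ls. j \<in> set js \<Longrightarrow> 0 \<le> L \<Longrightarrow>
      run (blk j @ Ls) (cs @ [A, B, L, 0]) = run Ls (cs @ [A, B, L + v j, 0])"
    and "\<And>j. j \<in> set js \<Longrightarrow> 0 \<le> v j" and "0 \<le> L"
  shows "run (concat (map blk js) @ Ls) (cs @ [A, B, L, 0]) =
    run Ls (cs @ [A, B, L + sum_list (map v js), 0])"
  using assms
proof (induction js arbitrary: L)
  case (Cons j js)
  have "run (concat (map blk (j # js)) @ Ls) (cs @ [A, B, L, 0]) =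
      run (concat (map blk js) @ Ls) (cs @ [A, B, L + v j, 0])"
    using Cons.prems by simp
  also have "\<dots> = run Ls (cs @ [A, B, L + v j + sum_list (map v js), 0])"
    using Cons.prems by (intro Cons.IH) auto
  finally show ?case
    by (simp add: add.assoc)
qed simp

definition bump_layers :: "(real^'n) list \<Rightarrow> real \<Rightarrow> real^'n \<Rightarrow> real^'n \<Rightarrow> real \<Rightarrow> layer list" where
  "bump_layers bs c a b K =
    concat (map (\<lambda>j. ramp_layers (length bs) j K (- K * (a \<bullet> bs ! j + 1))
                   @ ramp_layers (length bs) j (- K) (K * (b \<bullet> bs ! j + 1))) [0..<length bs]) @
    [carry_layer (length bs) (replicate (length bs) 0) [1, 0, 0, 0] [0, 1, 0, 0] [0, 0, 0, 0] [0, 0, 1, 0]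
       (1 - 2 * real (length bs)),
     carry_layer (length bs) (replicate (length bs) 0) [1, 0, 0, max c 0] [0, 1, 0, max (- c) 0]
       [0, 0, 0, 0] [0, 0, 0, 0] 0]"

lemma run_bump_layers:
  fixes y :: "real^'n" and bs :: "(real^'n) list"
  defines "cs \<equiv> map (\<lambda>i. y \<bullet> i + 1) bs"
  assumes bs: "distinct bs" "set bs = Basis" and y: "\<forall>i\<in>Basis. \<bar>y \<bullet> i\<bar> \<le> 1"
    and "0 \<le> A" "0 \<le> B"
  shows "run (bump_layers bs c a b K @ Ls) (cs @ [A, B, 0, 0]) =
    run Ls (cs @ [A + max c 0 * box_bump a b K y, B + max (- c) 0 * box_bump a b K y, 0, 0])"
proof -
  let ?n = "length bs"
  define h where "h i = clamp01 (K * (y \<bullet> i - a \<bullet> i)) + clamp01 (K * (b \<bullet> i - y \<bullet> i))" for i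
  have n: "length cs = ?n" "real ?n = real CARD('n)"
    using bs distinct_card[of bs] by (auto simp: cs_def)
  have cs_nonneg: "\<forall>c\<in>set cs. 0 \<le> c"
    using y bs by (auto simp: cs_def abs_le_iff)
  have h_nonneg: "0 \<le> h i" for i
    by (simp add: h_def clamp01_nonneg)
  have sum_h: "sum_list (map (\<lambda>j. h (bs ! j)) [0..<?n]) = (\<Sum>i\<in>Basis. h i)"
  proof -
    have "map (\<lambda>j. h (bs ! j)) [0..<?n] = map h bs"
      by (rule nth_equalityI) auto
    then show ?thesis
      using bs by (simp only: sum_list_distinct_conv_sum_set)
  qed
  have ramps: "run ((ramp_layers ?n j K (- K * (a \<bullet> bs ! j + 1))
                     @ ramp_layers ?n j (- K) (K * (b \<bullet> bs ! j + 1))) @ Ls') (cs @ [A, B, L, 0])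
      = run Ls' (cs @ [A, B, L + h (bs ! j), 0])" if "j \<in> set [0..<?n]" "0 \<le> L" for j L Ls'
  proof -
    have j: "j < ?n" and csj: "cs ! j = y \<bullet> bs ! j + 1"
      using that by (auto simp: cs_def)
    have "run ((ramp_layers ?n j K (- K * (a \<bullet> bs ! j + 1))
                @ ramp_layers ?n j (- K) (K * (b \<bullet> bs ! j + 1))) @ Ls') (cs @ [A, B, L, 0])
      = run Ls' (cs @ [A, B, L + clamp01 (K * cs ! j + - K * (a \<bullet> bs ! j + 1))
                            + clamp01 (- K * cs ! j + K * (b \<bullet> bs ! j + 1)), 0])"
      using n j cs_nonneg assms that
      by (simp del: run.simps add: run_ramp_layers clamp01_nonneg)
    also have "K * cs ! j + - K * (a \<bullet> bs ! j + 1) = K * (y \<bullet> bs ! j - a \<bullet> bs ! j)"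
      by (simp add: csj algebra_simps)
    also have "- K * cs ! j + K * (b \<bullet> bs ! j + 1) = K * (b \<bullet> bs ! j - y \<bullet> bs ! j)"
      by (simp add: csj algebra_simps)
    finally show ?thesis
      by (simp add: h_def add.assoc)
  qed
  have "run (bump_layers bs c a b K @ Ls) (cs @ [A, B, 0, 0]) =
      run ([carry_layer ?n (replicate ?n 0) [1, 0, 0, 0] [0, 1, 0, 0] [0, 0, 0, 0] [0, 0, 1, 0] (1 - 2 * real ?n),
            carry_layer ?n (replicate ?n 0) [1, 0, 0, max c 0] [0, 1, 0, max (- c) 0]
              [0, 0, 0, 0] [0, 0, 0, 0] 0] @ Ls)
        (cs @ [A, B, 0 + sum_list (map (\<lambda>j. h (bs ! j)) [0..<?n]), 0])"
    unfolding bump_layers_def append_assoc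
    by (rule run_concat_accumulate) (use ramps h_nonneg in auto)
  also have "\<dots> = run Ls (cs @ [A + max c 0 * relu ((\<Sum>i\<in>Basis. h i) - (2 * real ?n - 1)),
                               B + max (- c) 0 * relu ((\<Sum>i\<in>Basis. h i) - (2 * real ?n - 1)), 0, 0])"
    using n cs_nonneg assms sum_nonneg[of Basis h] h_nonneg unfolding sum_h
    by (simp del: run.simps add: run_carry_layer list_dot_replicate_0 list_dot_4 relu_of_nonneg
        relu_nonneg algebra_simps)
  finally show ?thesis
    using n by (simp add: box_bump_def h_def)
qed

definition basis_list :: "'a::euclidean_space list" where
  "basis_list = (SOME bs. set bs = Basis \<and> distinct bs)"

lemma distinct_basis_list: "distinct (basis_list :: 'a::euclidean_space list)"
  and set_basis_list: "set (basis_list :: 'a::euclidean_space list) = Basis"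
  using someI_ex[OF finite_distinct_list[OF finite_Basis]] by (auto simp: basis_list_def)

lemma length_basis_list: "length (basis_list :: (real^'n) list) = CARD('n)"
  using distinct_card[OF distinct_basis_list[where 'a = "real^'n"]] by (simp add: set_basis_list)

text \<open>The output neuron computes \<open>relu A - relu B\<close>: positive and negative coefficients are
  accumulated separately because the accumulators pass through ReLU.\<close>
definition bump_net :: "(real \<times> (real^'n) \<times> (real^'n) \<times> real) list \<Rightarrow> 'n relu_net" where
  "bump_net gs =
    ((basis_list @ replicate 4 0, replicate CARD('n) 1 @ replicate 4 0),
     concat (map (\<lambda>(c, a, b, K). bump_layers basis_list c a b K) gs) @
     [([replicate CARD('n) 0 @ [1, -1, 0, 0]], [0])])"

lemma run_bump_layers_list:
  fixes y :: "real^'n"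
  defines "cs \<equiv> map (\<lambda>i. y \<bullet> i + 1) basis_list"
  assumes y: "\<forall>i\<in>Basis. \<bar>y \<bullet> i\<bar> \<le> 1" and "0 \<le> A" "0 \<le> B"
  shows "run (concat (map (\<lambda>(c, a, b, K). bump_layers basis_list c a b K) gs) @ Ls) (cs @ [A, B, 0, 0]) =
    run Ls (cs @ [A + (\<Sum>(c, a, b, K)\<leftarrow>gs. max c 0 * box_bump a b K y),
                  B + (\<Sum>(c, a, b, K)\<leftarrow>gs. max (- c) 0 * box_bump a b K y), 0, 0])"
  using assms(3,4)
proof (induction gs arbitrary: A B)
  case (Cons g gs)
  obtain c a b K where g: "g = (c, a, b, K)"
    by (cases g) auto
  have "run (concat (map (\<lambda>(c, a, b, K). bump_layers basis_list c a b K) (g # gs)) @ Ls) (cs @ [A, B, 0, 0])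
      = run (concat (map (\<lambda>(c, a, b, K). bump_layers basis_list c a b K) gs) @ Ls)
          (cs @ [A + max c 0 * box_bump a b K y, B + max (- c) 0 * box_bump a b K y, 0, 0])"
    using run_bump_layers[OF distinct_basis_list set_basis_list y] Cons.prems
    by (simp add: g cs_def)
  also have "\<dots> = run Ls (cs @ [A + max c 0 * box_bump a b K y + (\<Sum>(c, a, b, K)\<leftarrow>gs. max c 0 * box_bump a b K y),
      B + max (- c) 0 * box_bump a b K y + (\<Sum>(c, a, b, K)\<leftarrow>gs. max (- c) 0 * box_bump a b K y), 0, 0])"
    using Cons.prems box_bump_nonneg[of a b K y] by (intro Cons.IH) auto
  finally show ?case
    by (simp add: g add.assoc)
qed simp

lemma net_fun_bump_net:
  fixes y :: "real^'n"
  assumes y: "\<forall>i\<in>Basis. \<bar>y \<bullet> i\<bar> \<le> 1"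
  shows "net_fun (bump_net gs) y = bump_comb gs y"
proof -
  define cs where "cs = map (\<lambda>i. y \<bullet> i + 1) (basis_list :: (real^'n) list)"
  define P where "P = (\<Sum>(c, a, b, K)\<leftarrow>gs. max c 0 * box_bump a b K y)"
  define Q where "Q = (\<Sum>(c, a, b, K)\<leftarrow>gs. max (- c) 0 * box_bump a b K y)"
  have PQ: "0 \<le> P" "0 \<le> Q"
    unfolding P_def Q_def by (auto intro!: sum_list_nonneg simp: box_bump_nonneg)
  have "affine_first (fst (bump_net gs)) y = cs @ [0, 0, 0, 0]"
    by (simp add: affine_first_def bump_net_def cs_def zip_append length_basis_list map_replicate_const
        zip_map_fst_snd zip_replicate2 map_zip_map2 inner_commute numeral_eq_Suc cong: map_cong)
  then have "net_fun (bump_net gs) y =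
      hd (run [([replicate CARD('n) 0 @ [1, -1, 0, 0]], [0])] (cs @ [0 + P, 0 + Q, 0, 0]))"
    unfolding net_fun_def P_def Q_def cs_def
    by (simp del: run.simps add: bump_net_def run_bump_layers_list[OF y])
  also have "\<dots> = P - Q"
    using PQ by (simp add: affine_eq_map_list_dot cs_def length_basis_list list_dot_replicate_0_append
        list_dot_4 relu_of_nonneg)
  also have "\<dots> = bump_comb gs y"
    unfolding P_def Q_def bump_comb_def
    by (induction gs) (auto simp: algebra_simps max_def)
  finally show ?thesis .
qed

definition square_layer :: "nat \<Rightarrow> layer \<Rightarrow> bool" where
  "square_layer d L \<longleftrightarrow> length (fst L) = d \<and> length (snd L) = d \<and> (\<forall>w\<in>set (fst L). length w = d)"

lemma valid_layers_append_square:
  "\<forall>L\<in>set Ls. square_layer d L \<Longrightarrow> valid_layers d (Ls @ Ls') = valid_layers d Ls'"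
  by (induction Ls) (auto simp: square_layer_def)

lemma square_layer_bump_layers:
  "L \<in> set (bump_layers bs c a b K) \<Longrightarrow> square_layer (length bs + 4) L"
  by (auto simp: bump_layers_def ramp_layers_def carry_layer_def square_layer_def)

lemma valid_net_bump_net: "valid_net (bump_net gs :: 'n::finite relu_net)"
proof -
  have "valid_layers (CARD('n) + 4)
      (concat (map (\<lambda>(c, a, b, K). bump_layers (basis_list :: (real^'n) list) c a b K) gs) @
       [([replicate CARD('n) 0 @ [1, -1, 0, 0]], [0])])"
    using square_layer_bump_layers[where bs = "basis_list :: (real^'n) list"]
    by (subst valid_layers_append_square) (auto simp: length_basis_list)
  then show ?thesis
    by (simp add: valid_net_def bump_net_def length_basis_list)
qed

lemma net_width_bump_net: "net_width (bump_net gs :: 'n::finite relu_net) \<le> CARD('n) + 4"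
proof -
  have "set (butlast (layer_sizes (bump_net gs :: 'n relu_net))) \<subseteq> {CARD('n) + 4}"
    using square_layer_bump_layers[where bs = "basis_list :: (real^'n) list"]
    by (auto simp: layer_sizes_def bump_net_def square_layer_def butlast_append length_basis_list)
  then show ?thesis
    unfolding net_width_def by (intro Max.boundedI) auto
qed

section \<open>The \<open>\<ell>\<^sup>1\<close> normalization\<close>

lemma l1norm_nonneg: "0 \<le> l1norm x"
  by (simp add: l1norm_def sum_nonneg)

lemma l1norm_eq_0_iff: "l1norm x = 0 \<longleftrightarrow> x = 0"
  by (simp add: l1norm_def sum_nonneg_eq_0_iff vec_eq_iff)

lemma l1norm_pos: "x \<noteq> 0 \<Longrightarrow> 0 < l1norm x"
  using l1norm_nonneg[of x] l1norm_eq_0_iff[of x] by linarith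

lemma l1norm_scaleR: "l1norm (c *\<^sub>R x) = \<bar>c\<bar> * l1norm x"
  by (simp add: l1norm_def abs_mult sum_distrib_left)

lemma continuous_on_l1norm: "continuous_on S l1norm"
  unfolding l1norm_def by (intro continuous_intros)

lemma borel_measurable_l1norm: "l1norm \<in> borel_measurable lebesgue"
  using continuous_imp_measurable_on_sets_lebesgue[OF continuous_on_l1norm, of UNIV]
  by (simp add: lebesgue_on_UNIV_eq)

lemma abs_inner_Basis_le_l1norm:
  assumes "i \<in> Basis"
  shows "\<bar>x \<bullet> i\<bar> \<le> l1norm x"
proof -
  obtain k where "i = axis k 1"
    using assms by (auto simp: Basis_vec_def)
  then have "\<bar>x \<bullet> i\<bar> = \<bar>x $ k\<bar>"
    by (simp add: inner_axis)
  also have "\<dots> \<le> l1norm x"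
    unfolding l1norm_def by (rule member_le_sum) auto
  finally show ?thesis .
qed

definition l1_normalize :: "real^'n \<Rightarrow> real^'n" where
  "l1_normalize x = x /\<^sub>R l1norm x"

lemma abs_inner_l1_normalize_le_1:
  assumes "i \<in> Basis"
  shows "\<bar>l1_normalize x \<bullet> i\<bar> \<le> 1"
proof (cases "x = 0")
  case False
  then have "\<bar>l1_normalize x \<bullet> i\<bar> = \<bar>x \<bullet> i\<bar> / l1norm x"
    using l1norm_pos[OF False] by (simp add: l1_normalize_def abs_mult divide_inverse mult.commute)
  then show ?thesis
    using l1norm_pos[OF False] abs_inner_Basis_le_l1norm[OF assms, of x] by simp
qed (simp add: l1_normalize_def)

lemma borel_measurable_l1_normalize: "l1_normalize \<in> borel_measurable lebesgue"
  unfolding l1_normalize_def[abs_def]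
  by (intro borel_measurable_scaleR borel_measurable_inverse borel_measurable_l1norm
      id_borel_measurable_lebesgue[unfolded id_def])

lemma continuous_on_l1_normalize: "0 \<notin> S \<Longrightarrow> continuous_on S l1_normalize"
  unfolding l1_normalize_def[abs_def]
  by (intro continuous_intros continuous_on_l1norm) (auto simp: l1norm_eq_0_iff)

lemma eq_scaleR_if_l1_normalize_eq:
  assumes "l1_normalize x = l1_normalize z" "x \<noteq> 0" "z \<noteq> 0"
  shows "x = (l1norm x / l1norm z) *\<^sub>R z"
proof -
  have "x = l1norm x *\<^sub>R l1_normalize x"
    using l1norm_pos[OF assms(2)] by (simp add: l1_normalize_def)
  also have "\<dots> = (l1norm x / l1norm z) *\<^sub>R z"
    using assms(1) by (simp add: l1_normalize_def divide_inverse)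
  finally show ?thesis .
qed

section \<open>Weighted \<open>L\<^sup>1\<close> approximation\<close>

definition dyadic_approx :: "nat \<Rightarrow> real \<Rightarrow> real" where
  "dyadic_approx k t =
    (\<Sum>j\<in>{- int (k * 2 ^ k)..int (k * 2 ^ k)}. real_of_int j / 2 ^ k * indicator {s. \<lfloor>2 ^ k * s\<rfloor> = j} t)"

lemma dyadic_approx_eq:
  "dyadic_approx k t =
    (if \<lfloor>2 ^ k * t\<rfloor> \<in> {- int (k * 2 ^ k)..int (k * 2 ^ k)} then real_of_int \<lfloor>2 ^ k * t\<rfloor> / 2 ^ k else 0)"
proof -
  have "dyadic_approx k t = (\<Sum>j\<in>{- int (k * 2 ^ k)..int (k * 2 ^ k)}.
      if j = \<lfloor>2 ^ k * t\<rfloor> then real_of_int \<lfloor>2 ^ k * t\<rfloor> / 2 ^ k else 0)"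
    unfolding dyadic_approx_def by (rule sum.cong) (auto simp: indicator_def)
  then show ?thesis
    by (simp only: sum.delta finite_atLeastAtMost_int)
qed

lemma abs_dyadic_approx_le: "\<bar>dyadic_approx k t\<bar> \<le> \<bar>t\<bar> + 1"
proof -
  have "\<bar>real_of_int \<lfloor>2 ^ k * t\<rfloor>\<bar> \<le> \<bar>2 ^ k * t\<bar> + 1"
    by linarith
  then have "\<bar>real_of_int \<lfloor>2 ^ k * t\<rfloor>\<bar> / 2 ^ k \<le> \<bar>t\<bar> + 1 / 2 ^ k"
    by (simp add: divide_le_eq abs_mult algebra_simps)
  also have "\<dots> \<le> \<bar>t\<bar> + 1"
    by simp
  finally show ?thesis
    by (simp add: dyadic_approx_eq abs_divide)
qed

lemma dyadic_approx_error:
  assumes "\<bar>t\<bar> \<le> real k"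
  shows "\<bar>t - dyadic_approx k t\<bar> \<le> 1 / 2 ^ k"
proof -
  have bounds: "- real (k * 2 ^ k) \<le> 2 ^ k * t" "2 ^ k * t \<le> real (k * 2 ^ k)"
    using assms mult_left_mono[of "- real k" t "2 ^ k"] mult_left_mono[of t "real k" "2 ^ k"]
    by (auto simp: abs_le_iff mult.commute)
  have "- int (k * 2 ^ k) \<le> \<lfloor>2 ^ k * t\<rfloor>" "\<lfloor>2 ^ k * t\<rfloor> \<le> int (k * 2 ^ k)"
    using bounds unfolding le_floor_iff floor_le_iff of_int_minus of_int_of_nat_eq by linarith+
  then have "t - dyadic_approx k t = (2 ^ k * t - real_of_int \<lfloor>2 ^ k * t\<rfloor>) / 2 ^ k"
    by (simp add: dyadic_approx_eq field_simps)
  moreover have "\<bar>2 ^ k * t - real_of_int \<lfloor>2 ^ k * t\<rfloor>\<bar> \<le> 1"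
    by linarith
  ultimately show ?thesis
    by (simp add: abs_divide divide_right_mono)
qed

lemma dyadic_approx_tendsto: "(\<lambda>k. dyadic_approx k t) \<longlonglongrightarrow> t"
proof (rule LIM_zero_cancel, rule Lim_null_comparison)
  obtain n where n: "\<bar>t\<bar> \<le> real n"
    using real_arch_simple by blast
  show "\<forall>\<^sub>F k in sequentially. norm (dyadic_approx k t - t) \<le> (1 / 2) ^ k"
  proof (rule eventually_sequentiallyI)
    fix k assume "n \<le> k"
    then have "\<bar>t\<bar> \<le> real k"
      using n of_nat_mono[of n k] by linarith
    then show "norm (dyadic_approx k t - t) \<le> (1 / 2) ^ k"
      using dyadic_approx_error by (simp add: abs_minus_commute power_one_over)
  qed
  show "(\<lambda>k. (1 / 2 :: real) ^ k) \<longlonglongrightarrow> 0"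
    by (simp add: LIMSEQ_realpow_zero)
qed

locale weighted_L1_approximation =
  fixes M :: "'a measure" and w :: "'a \<Rightarrow> real" and G :: "('a \<Rightarrow> real) set"
  assumes integrable_weight: "integrable M w"
    and weight_nonneg: "\<And>x. 0 \<le> w x"
    and approximants_measurable: "G \<subseteq> borel_measurable M"
    and zero_approximant: "(\<lambda>_. 0) \<in> G"
    and add_approximants: "g \<in> G \<Longrightarrow> h \<in> G \<Longrightarrow> (\<lambda>x. g x + h x) \<in> G"
    and scale_approximant: "g \<in> G \<Longrightarrow> (\<lambda>x. c * g x) \<in> G"
begin

definition approximable :: "('a \<Rightarrow> real) \<Rightarrow> bool" where
  "approximable u \<longleftrightarrow> (\<forall>\<delta>>0. \<exists>g\<in>G. integrable M (\<lambda>x. w x * \<bar>u x - g x\<bar>) \<and>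
                                     (\<integral>x. w x * \<bar>u x - g x\<bar> \<partial>M) < \<delta>)"

lemma approximable_approximant: "g \<in> G \<Longrightarrow> approximable g"
  unfolding approximable_def by (intro allI impI bexI[of _ g]) auto

lemma approximable_cong:
  assumes "approximable u" "\<And>x. w x \<noteq> 0 \<Longrightarrow> u x = v x"
  shows "approximable v"
proof -
  have "(\<lambda>x. w x * \<bar>u x - g x\<bar>) = (\<lambda>x. w x * \<bar>v x - g x\<bar>)" for g
    using assms(2) by (metis mult_zero_left)
  then show ?thesis
    using assms(1) by (simp add: approximable_def)
qed

lemma approximable_scale:
  assumes "approximable u"
  shows "approximable (\<lambda>x. c * u x)"
proof (cases "c = 0")
  case True
  then show ?thesis
    using approximable_approximant[OF zero_approximant] by simp
next
  case False
  show ?thesis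
    unfolding approximable_def
  proof (intro allI impI)
    fix \<delta> :: real assume "0 < \<delta>"
    then obtain g where g: "g \<in> G" "integrable M (\<lambda>x. w x * \<bar>u x - g x\<bar>)"
        "(\<integral>x. w x * \<bar>u x - g x\<bar> \<partial>M) < \<delta> / \<bar>c\<bar>"
      using assms False unfolding approximable_def by (metis divide_pos_pos zero_less_abs_iff)
    have eq: "(\<lambda>x. w x * \<bar>c * u x - c * g x\<bar>) = (\<lambda>x. \<bar>c\<bar> * (w x * \<bar>u x - g x\<bar>))"
      by (simp add: abs_mult right_diff_distrib[symmetric] mult.left_commute)
    show "\<exists>g\<in>G. integrable M (\<lambda>x. w x * \<bar>c * u x - g x\<bar>) \<and> (\<integral>x. w x * \<bar>c * u x - g x\<bar> \<partial>M) < \<delta>"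
      using g False scale_approximant[OF g(1), of c]
      by (intro bexI[of _ "\<lambda>x. c * g x"]) (auto simp: eq field_simps)
  qed
qed

lemma approximable_add_approximant:
  assumes "g \<in> G" "approximable v"
  shows "approximable (\<lambda>x. g x + v x)"
  unfolding approximable_def
proof (intro allI impI)
  fix \<delta> :: real assume "0 < \<delta>"
  then obtain h where "h \<in> G" "integrable M (\<lambda>x. w x * \<bar>v x - h x\<bar>)" "(\<integral>x. w x * \<bar>v x - h x\<bar> \<partial>M) < \<delta>"
    using assms(2) unfolding approximable_def by blast
  then show "\<exists>h\<in>G. integrable M (\<lambda>x. w x * \<bar>g x + v x - h x\<bar>) \<and> (\<integral>x. w x * \<bar>g x + v x - h x\<bar> \<partial>M) < \<delta>"
    using add_approximants[OF assms(1)] by (intro bexI[of _ "\<lambda>x. g x + h x"]) auto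
qed

lemma weighted_error_bound:
  assumes "u \<in> borel_measurable M" "v \<in> borel_measurable M" "integrable M h"
    and bound: "\<And>x. w x * \<bar>u x - v x\<bar> \<le> h x"
  shows "integrable M (\<lambda>x. w x * \<bar>u x - v x\<bar>)" "(\<integral>x. w x * \<bar>u x - v x\<bar> \<partial>M) \<le> integral\<^sup>L M h"
proof -
  have "(\<lambda>x. w x * \<bar>u x - v x\<bar>) \<in> borel_measurable M"
    using borel_measurable_integrable[OF integrable_weight] assms(1,2) by auto
  then show integrable: "integrable M (\<lambda>x. w x * \<bar>u x - v x\<bar>)"
    by (rule Bochner_Integration.integrable_bound[OF assms(3)])
      (use bound weight_nonneg in \<open>auto intro!: AE_I2 order_trans[OF _ abs_ge_self] simp: abs_mult\<close>)
  show "(\<integral>x. w x * \<bar>u x - v x\<bar> \<partial>M) \<le> integral\<^sup>L M h"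
    using integral_mono[OF integrable assms(3) bound] .
qed

lemma approximable_if_close:
  assumes u: "u \<in> borel_measurable M"
    and close: "\<And>\<delta>. 0 < \<delta> \<Longrightarrow> \<exists>v. approximable v \<and> integrable M (\<lambda>x. w x * \<bar>u x - v x\<bar>) \<and>
                                      (\<integral>x. w x * \<bar>u x - v x\<bar> \<partial>M) < \<delta>"
  shows "approximable u"
  unfolding approximable_def
proof (intro allI impI)
  fix \<delta> :: real assume "0 < \<delta>"
  then obtain v where v: "approximable v" "integrable M (\<lambda>x. w x * \<bar>u x - v x\<bar>)"
      "(\<integral>x. w x * \<bar>u x - v x\<bar> \<partial>M) < \<delta> / 2"
    using close[of "\<delta> / 2"] by auto
  obtain g where g: "g \<in> G" "integrable M (\<lambda>x. w x * \<bar>v x - g x\<bar>)" "(\<integral>x. w x * \<bar>v x - g x\<bar> \<partial>M) < \<delta> / 2"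
    using v(1) \<open>0 < \<delta>\<close> unfolding approximable_def by (meson half_gt_zero)
  have triangle: "w x * \<bar>u x - g x\<bar> \<le> w x * \<bar>u x - v x\<bar> + w x * \<bar>v x - g x\<bar>" for x
    using weight_nonneg[of x] by (simp add: distrib_left[symmetric] mult_left_mono)
  note error_bound = weighted_error_bound[OF u _ Bochner_Integration.integrable_add[OF v(2) g(2)] triangle]
  have "(\<integral>x. w x * \<bar>u x - g x\<bar> \<partial>M) < \<delta>"
    using error_bound(2) g(1) approximants_measurable v(2,3) g(2,3) by auto
  then show "\<exists>g\<in>G. integrable M (\<lambda>x. w x * \<bar>u x - g x\<bar>) \<and> (\<integral>x. w x * \<bar>u x - g x\<bar> \<partial>M) < \<delta>"
    using error_bound(1) g(1) approximants_measurable by blast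
qed

lemma approximable_add:
  assumes "approximable u" "approximable v" "u \<in> borel_measurable M" "v \<in> borel_measurable M"
  shows "approximable (\<lambda>x. u x + v x)"
proof (rule approximable_if_close)
  fix \<delta> :: real assume "0 < \<delta>"
  then obtain g where "g \<in> G" "integrable M (\<lambda>x. w x * \<bar>u x - g x\<bar>)" "(\<integral>x. w x * \<bar>u x - g x\<bar> \<partial>M) < \<delta>"
    using assms(1) unfolding approximable_def by blast
  then show "\<exists>v'. approximable v' \<and> integrable M (\<lambda>x. w x * \<bar>u x + v x - v' x\<bar>) \<and>
      (\<integral>x. w x * \<bar>u x + v x - v' x\<bar> \<partial>M) < \<delta>"
    using approximable_add_approximant[OF _ assms(2)] by (intro exI[of _ "\<lambda>x. g x + v x"]) auto
qed (use assms(3,4) in simp)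

lemma approximable_sum:
  assumes "finite J" "\<And>j. j \<in> J \<Longrightarrow> approximable (u j)" "\<And>j. j \<in> J \<Longrightarrow> u j \<in> borel_measurable M"
  shows "approximable (\<lambda>x. \<Sum>j\<in>J. u j x)"
  using assms
proof (induction J rule: finite_induct)
  case empty
  then show ?case
    using approximable_approximant[OF zero_approximant] by simp
next
  case (insert j J)
  have "approximable (\<lambda>x. u j x + (\<Sum>j\<in>J. u j x))"
    by (rule approximable_add) (use insert in \<open>auto intro!: borel_measurable_sum\<close>)
  with insert show ?case
    by simp
qed

lemma approximable_tendsto:
  assumes u: "u \<in> borel_measurable M"
    and v: "\<And>k. approximable (v k)" "\<And>k. v k \<in> borel_measurable M"
    and lim: "\<And>x. (\<lambda>k. v k x) \<longlonglongrightarrow> u x"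
    and h: "integrable M h" "\<And>k x. w x * \<bar>u x - v k x\<bar> \<le> h x"
  shows "approximable u"
proof (rule approximable_if_close[OF u])
  fix \<delta> :: real assume "0 < \<delta>"
  define e where "e k x = w x * \<bar>u x - v k x\<bar>" for k x
  have e_measurable: "e k \<in> borel_measurable M" for k
    unfolding e_def using borel_measurable_integrable[OF integrable_weight] u v(2) by auto
  have e_bound: "norm (e k x) \<le> h x" for k x
    using h(2) weight_nonneg by (simp add: e_def)
  have "(\<lambda>k. e k x) \<longlonglongrightarrow> 0" for x
    using tendsto_mult[OF tendsto_const tendsto_rabs_zero[OF LIM_zero[OF lim]], of "w x"]
    by (simp add: e_def abs_minus_commute)
  then have "(\<lambda>k. integral\<^sup>L M (e k)) \<longlonglongrightarrow> 0"
    using integral_dominated_convergence[of "\<lambda>_. 0" M e h] e_measurable e_bound h(1) by simp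
  then obtain k where "integral\<^sup>L M (e k) < \<delta>"
    using \<open>0 < \<delta>\<close> by (metis eventually_sequentially order_refl order_tendstoD(2))
  moreover have "integrable M (e k)"
    using e_measurable e_bound
    by (intro Bochner_Integration.integrable_bound[OF h(1)]) (auto intro!: AE_I2 order_trans[OF _ abs_ge_self])
  ultimately show "\<exists>v. approximable v \<and> integrable M (\<lambda>x. w x * \<bar>u x - v x\<bar>) \<and>
      (\<integral>x. w x * \<bar>u x - v x\<bar> \<partial>M) < \<delta>"
    using v(1) unfolding e_def by blast
qed

lemma approximable_indicator_borel:
  fixes p :: "'a \<Rightarrow> 'b::euclidean_space"
  assumes p: "p \<in> borel_measurable M" and one: "approximable (\<lambda>_. 1)"
    and boxes: "\<And>a b. approximable (\<lambda>x. indicator (box a b) (p x))"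
    and B: "B \<in> sets borel"
  shows "approximable (\<lambda>x. indicator B (p x))"
proof -
  have sets_borel: "sets (borel :: 'b measure) = sigma_sets UNIV (range (\<lambda>(a, b). box a b))"
    by (subst borel_eq_box) (simp add: sets_measure_of)
  have measurable: "(\<lambda>x. indicator A (p x) :: real) \<in> borel_measurable M" if "A \<in> sets borel" for A
    using p that by measurable
  have "Int_stable (range (\<lambda>(a, b). box a b :: 'b set))"
    by (auto simp: Int_stable_def box_Int_box)
  moreover have "range (\<lambda>(a, b). box a b :: 'b set) \<subseteq> Pow UNIV"
    by simp
  moreover have "B \<in> sigma_sets UNIV (range (\<lambda>(a, b). box a b :: 'b set))"
    using B sets_borel by simp
  ultimately show ?thesis
  proof (induction B rule: sigma_sets_induct_disjoint)
    case (basic A)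
    then show ?case
      using boxes by auto
  next
    case empty
    then show ?case
      using approximable_approximant[OF zero_approximant] by simp
  next
    case (compl A)
    have "approximable (\<lambda>x. 1 + -1 * indicator A (p x))"
      using compl measurable sets_borel
      by (intro approximable_add one approximable_scale) auto
    moreover have "(\<lambda>x. 1 + -1 * indicator A (p x)) = (\<lambda>x. indicator (UNIV - A) (p x) :: real)"
      by (auto simp: indicator_def)
    ultimately show ?case
      by simp
  next
    case (union A)
    have A_borel: "A i \<in> sets borel" for i
      using union.hyps(2) sets_borel by auto
    define U where "U n = (\<Union>i<n. A i)" for n
    have U_borel: "U n \<in> sets borel" for n
      using A_borel by (auto simp: U_def)
    have U_approximable: "approximable (\<lambda>x. indicator (U n) (p x))" for n
    proof (induction n)
      case 0
      then show ?case
        using approximable_approximant[OF zero_approximant] by (simp add: U_def)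
    next
      case (Suc n)
      have "A i \<inter> A n = {}" if "i < n" for i
        using union.hyps(1) that by (simp add: disjoint_family_on_def)
      then have "U n \<inter> A n = {}"
        by (auto simp: U_def)
      moreover have "U (Suc n) = U n \<union> A n"
        by (auto simp: U_def lessThan_Suc)
      ultimately have "(\<lambda>x. indicator (U (Suc n)) (p x) :: real) = (\<lambda>x. indicator (U n) (p x) + indicator (A n) (p x))"
        by (simp add: indicator_disj_union)
      then show ?case
        using approximable_add[OF Suc union.IH[of n] measurable[OF U_borel] measurable[OF A_borel]] by simp
    qed
    have "(\<Union>i. A i) \<in> sets borel"
      using A_borel by auto
    then show ?case
    proof (rule approximable_tendsto[OF measurable U_approximable measurable[OF U_borel] _ integrable_weight])
      show "(\<lambda>n. indicator (U n) (p x)) \<longlonglongrightarrow> (indicator (\<Union>i. A i) (p x) :: real)" for x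
        unfolding U_def by (rule LIMSEQ_indicator_UN)
      show "w x * \<bar>indicator (\<Union>i. A i) (p x) - indicator (U n) (p x)\<bar> \<le> w x" for n x
        using weight_nonneg[of x] by (auto simp: indicator_def)
    qed
  qed
qed

lemma approximable_if_preimages_approximable:
  assumes u: "u \<in> borel_measurable M" and integrable: "integrable M (\<lambda>x. w x * \<bar>u x\<bar>)"
    and preimages: "\<And>B. B \<in> sets borel \<Longrightarrow> approximable (\<lambda>x. indicator B (u x))"
  shows "approximable u"
proof (rule approximable_tendsto[where v = "\<lambda>k x. dyadic_approx k (u x)"])
  define J where "J k = {- int (k * 2 ^ k)..int (k * 2 ^ k)}" for k :: nat
  have "approximable (\<lambda>x. \<Sum>j\<in>J k. real_of_int j / 2 ^ k * indicator {s. \<lfloor>2 ^ k * s\<rfloor> = j} (u x))" for k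
    using u by (intro approximable_sum approximable_scale preimages) (auto simp: J_def)
  then show "approximable (\<lambda>x. dyadic_approx k (u x))" for k
    by (simp add: dyadic_approx_def J_def)
  show "(\<lambda>x. dyadic_approx k (u x)) \<in> borel_measurable M" for k
    using u unfolding dyadic_approx_def by measurable
  show "(\<lambda>k. dyadic_approx k (u x)) \<longlonglongrightarrow> u x" for x
    by (rule dyadic_approx_tendsto)
  show "integrable M (\<lambda>x. 2 * (w x * \<bar>u x\<bar>) + w x)"
    using integrable integrable_weight by simp
  show "w x * \<bar>u x - dyadic_approx k (u x)\<bar> \<le> 2 * (w x * \<bar>u x\<bar>) + w x" for k x
  proof -
    have "\<bar>u x - dyadic_approx k (u x)\<bar> \<le> 2 * \<bar>u x\<bar> + 1"
      using abs_dyadic_approx_le[of k "u x"] by linarith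
    then have "w x * \<bar>u x - dyadic_approx k (u x)\<bar> \<le> w x * (2 * \<bar>u x\<bar> + 1)"
      by (rule mult_left_mono) (rule weight_nonneg)
    then show ?thesis
      by (simp add: algebra_simps)
  qed
qed (rule u)

end

section \<open>Approximation on cones\<close>

definition cone_weight :: "(real^'n) set \<Rightarrow> real^'n \<Rightarrow> real" where
  "cone_weight X x = indicator X x * l1norm x"

definition normalized_bump_combs :: "(real^'n::finite \<Rightarrow> real) set" where
  "normalized_bump_combs = range (\<lambda>gs x. bump_comb gs (l1_normalize x))"

lemma integrable_cone_weight:
  assumes "compact X"
  shows "integrable lebesgue (cone_weight X)"
proof -
  have "integrable lborel (\<lambda>x. indicator X x * l1norm x)"
    using borel_integrable_compact[OF assms continuous_on_l1norm] by simp
  moreover have "(\<lambda>x. indicator X x * l1norm x) \<in> borel_measurable lborel"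
    using borel_measurable_continuous_onI[OF continuous_on_l1norm] compact_imp_closed[OF assms]
    by (auto intro!: borel_measurable_times borel_measurable_indicator)
  ultimately show ?thesis
    by (simp add: cone_weight_def[abs_def] integrable_completion)
qed

lemma borel_measurable_normalized_bump_comb:
  "(\<lambda>x. bump_comb gs (l1_normalize x)) \<in> borel_measurable lebesgue"
  using borel_measurable_l1_normalize borel_measurable_continuous_onI[OF continuous_on_bump_comb]
  by (rule measurable_compose)

lemma abs_indicator_diff_l1_normalize_le:
  fixes S T X :: "(real^'n) set"
  assumes saturated: "\<And>x t. x \<in> S \<Longrightarrow> 0 < t \<Longrightarrow> t *\<^sub>R x \<in> X \<Longrightarrow> t *\<^sub>R x \<in> S"
    and T: "T \<subseteq> S - {0}" and x: "x \<in> X" "x \<noteq> 0"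
  shows "\<bar>indicator S x - indicator (l1_normalize ` T) (l1_normalize x)\<bar> \<le> (indicator (S - {0} - T) x :: real)"
proof (cases "x \<in> S - T")
  case True
  then show ?thesis
    using x(2) by (auto simp: indicator_def)
next
  case False
  have "x \<in> S \<longleftrightarrow> l1_normalize x \<in> l1_normalize ` T"
  proof
    assume "x \<in> S"
    then show "l1_normalize x \<in> l1_normalize ` T"
      using False by auto
  next
    assume "l1_normalize x \<in> l1_normalize ` T"
    then obtain z where z: "z \<in> T" "l1_normalize x = l1_normalize z"
      by auto
    then have "z \<in> S" "z \<noteq> 0"
      using T by auto
    moreover have "x = (l1norm x / l1norm z) *\<^sub>R z"
      using eq_scaleR_if_l1_normalize_eq[OF z(2) x(2) \<open>z \<noteq> 0\<close>] .
    moreover have "0 < l1norm x / l1norm z"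
      using l1norm_pos[OF x(2)] l1norm_pos[OF \<open>z \<noteq> 0\<close>] by simp
    ultimately show "x \<in> S"
      using saturated x(1) by metis
  qed
  then show ?thesis
    by (simp add: indicator_def)
qed

lemma cone_weight_indicator_diff_le:
  fixes S T X :: "(real^'n) set"
  assumes saturated: "\<And>x t. x \<in> S \<Longrightarrow> 0 < t \<Longrightarrow> t *\<^sub>R x \<in> X \<Longrightarrow> t *\<^sub>R x \<in> S"
    and T: "T \<subseteq> S - {0}" and R: "\<And>x. x \<in> X \<Longrightarrow> l1norm x \<le> R" "0 \<le> R"
  shows "cone_weight X x * \<bar>indicator S x - indicator (l1_normalize ` T) (l1_normalize x)\<bar>
    \<le> R * indicator (S - {0} - T) x"
proof (cases "x \<in> X \<and> x \<noteq> 0")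
  case True
  then show ?thesis
    using abs_indicator_diff_l1_normalize_le[OF saturated T, where x = x] R l1norm_nonneg[of x]
    by (intro mult_mono) (auto simp: cone_weight_def)
qed (use R(2) in \<open>auto simp: cone_weight_def l1norm_def\<close>)

lemma pos_homogeneous_zero:
  assumes "pos_homogeneous f"
  shows "f 0 = 0"
proof -
  have "f (2 *\<^sub>R 0) = 2 * f 0"
    using assms unfolding pos_homogeneous_def by (metis zero_less_numeral)
  then show ?thesis
    by simp
qed

locale compact_cone_domain =
  fixes X :: "(real^'n::finite) set"
  assumes compact_domain: "compact X" and lebesgue_domain: "X \<in> sets lebesgue"

sublocale compact_cone_domain \<subseteq> weighted_L1_approximation lebesgue "cone_weight X" normalized_bump_combs
proof
  show "integrable lebesgue (cone_weight X)"
    using compact_domain by (rule integrable_cone_weight)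
  show "0 \<le> cone_weight X x" for x
    by (simp add: cone_weight_def l1norm_nonneg)
  show "normalized_bump_combs \<subseteq> borel_measurable lebesgue"
    using borel_measurable_normalized_bump_comb by (auto simp: normalized_bump_combs_def)
  show "(\<lambda>_. 0) \<in> normalized_bump_combs"
    by (auto simp: normalized_bump_combs_def bump_comb_def intro!: range_eqI[of _ _ "[]"])
  show "(\<lambda>x. g x + h x) \<in> normalized_bump_combs"
    if "g \<in> normalized_bump_combs" "h \<in> normalized_bump_combs" for g h
    using that by (auto simp: normalized_bump_combs_def bump_comb_append[symmetric])
  show "(\<lambda>x. c * g x) \<in> normalized_bump_combs" if "g \<in> normalized_bump_combs" for g c
    using that by (auto simp: normalized_bump_combs_def bump_comb_scale[symmetric])
qed

context compact_cone_domain
begin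

lemma approximable_one: "approximable (\<lambda>_. 1)"
proof -
  have "bump_comb [(1, - 2 *\<^sub>R One, 2 *\<^sub>R One, 1)] (l1_normalize x) = 1" for x :: "real^'n"
    using abs_inner_l1_normalize_le_1[of _ x] unfolding bump_comb_def
    by (simp, intro box_bump_eq_1) (force simp: abs_le_iff)
  then have "(\<lambda>_. 1) = (\<lambda>x :: real^'n. bump_comb [(1, - 2 *\<^sub>R One, 2 *\<^sub>R One, 1)] (l1_normalize x))"
    by simp
  then show ?thesis
    by (metis approximable_approximant normalized_bump_combs_def rangeI)
qed

lemma approximable_indicator_box: "approximable (\<lambda>x. indicator (box a b) (l1_normalize x))"
proof (rule approximable_tendsto[OF _ _ _ _ integrable_weight])
  show "approximable (\<lambda>x. bump_comb [(1, a, b, real k)] (l1_normalize x))" for k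
    by (rule approximable_approximant) (auto simp: normalized_bump_combs_def)
  show "(\<lambda>x. bump_comb [(1, a, b, real k)] (l1_normalize x)) \<in> borel_measurable lebesgue" for k
    by (rule borel_measurable_normalized_bump_comb)
  show "(\<lambda>k. bump_comb [(1, a, b, real k)] (l1_normalize x)) \<longlonglongrightarrow> indicator (box a b) (l1_normalize x)" for x
    using box_bump_tendsto_indicator by (simp add: bump_comb_def)
  show "cone_weight X x * \<bar>indicator (box a b) (l1_normalize x) - bump_comb [(1, a, b, real k)] (l1_normalize x)\<bar>
      \<le> cone_weight X x" for k x
    using box_bump_nonneg[of a b "real k" "l1_normalize x"] box_bump_le_1[of a b "real k" "l1_normalize x"]
      weight_nonneg[of x]
    by (intro mult_left_le) (auto simp: bump_comb_def indicator_def)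
qed (use borel_measurable_l1_normalize in measurable)

lemma approximable_indicator_l1_normalize:
  "B \<in> sets borel \<Longrightarrow> approximable (\<lambda>x. indicator B (l1_normalize x))"
  by (rule approximable_indicator_borel[OF borel_measurable_l1_normalize approximable_one
        approximable_indicator_box])

text \<open>A set closed under scaling within \<open>X\<close> agrees, up to small measure, with the preimage of the
  compact set of directions of an inner closed approximation.\<close>
lemma approximable_indicator_saturated:
  assumes S: "S \<in> sets lebesgue" "S \<subseteq> X"
    and saturated: "\<And>x t. x \<in> S \<Longrightarrow> 0 < t \<Longrightarrow> t *\<^sub>R x \<in> X \<Longrightarrow> t *\<^sub>R x \<in> S"
  shows "approximable (indicator S)"
proof (rule approximable_if_close)
  fix \<delta> :: real assume "0 < \<delta>"
  obtain R where R: "0 < R" "\<And>x. x \<in> X \<Longrightarrow> l1norm x \<le> R"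
    using compact_imp_bounded[OF compact_continuous_image[OF continuous_on_l1norm compact_domain]]
    by (force simp: bounded_pos)
  obtain T where T: "closed T" "T \<subseteq> S - {0}" "S - {0} - T \<in> lmeasurable"
      "emeasure lebesgue (S - {0} - T) < ennreal (\<delta> / (2 * R))"
  proof (rule sets_lebesgue_inner_closed)
    show "S - {0} \<in> sets lebesgue"
      using S(1) by auto
    show "0 < \<delta> / (2 * R)"
      using \<open>0 < \<delta>\<close> R(1) by simp
  qed
  have "compact T"
    using T(1,2) S(2) compact_domain by (meson bounded_subset compact_eq_bounded_closed Diff_subset order_trans)
  then have "compact (l1_normalize ` T)"
    using T(2) by (intro compact_continuous_image continuous_on_l1_normalize) auto
  then have closed_directions: "l1_normalize ` T \<in> sets borel"
    by (simp add: compact_imp_closed)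
  note error_bound = weighted_error_bound[where v = "\<lambda>x. indicator (l1_normalize ` T) (l1_normalize x)",
      OF _ _ _ cone_weight_indicator_diff_le[OF saturated T(2) R(2) less_imp_le[OF R(1)]]]
  have "measure lebesgue (S - {0} - T) < \<delta> / (2 * R)"
    using T(3,4) by (metis emeasure_eq_measure2 ennreal_less_iff measure_nonneg)
  then have "R * measure lebesgue (S - {0} - T) < \<delta>"
    using R(1) \<open>0 < \<delta>\<close> by (simp add: field_simps)
  then show "\<exists>v. approximable v \<and> integrable lebesgue (\<lambda>x. cone_weight X x * \<bar>indicator S x - v x\<bar>) \<and>
      (\<integral>x. cone_weight X x * \<bar>indicator S x - v x\<bar> \<partial>lebesgue) < \<delta>"
    using error_bound S(1) T(3) closed_directions borel_measurable_l1_normalize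
      approximable_indicator_l1_normalize[OF closed_directions]
    by (intro exI[of _ "\<lambda>x. indicator (l1_normalize ` T) (l1_normalize x)"])
      (fastforce simp: lmeasurable_iff_integrable intro: measurable_compose[OF _ borel_measurable_indicator])
qed (use assms in simp)

lemma approximable_if_scale_invariant:
  assumes u: "u \<in> borel_measurable lebesgue" "integrable lebesgue (\<lambda>x. cone_weight X x * \<bar>u x\<bar>)"
    and invariant: "\<And>x t. x \<in> X \<Longrightarrow> 0 < t \<Longrightarrow> t *\<^sub>R x \<in> X \<Longrightarrow> u (t *\<^sub>R x) = u x"
  shows "approximable u"
proof (rule approximable_if_preimages_approximable[OF u])
  fix B :: "real set" assume "B \<in> sets borel"
  then have "{x \<in> X. u x \<in> B} \<in> sets lebesgue"
    using u(1) lebesgue_domain by measurable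
  then have "approximable (indicator {x \<in> X. u x \<in> B})"
    using invariant by (intro approximable_indicator_saturated) auto
  then show "approximable (\<lambda>x. indicator B (u x))"
    by (rule approximable_cong) (auto simp: cone_weight_def indicator_def)
qed

lemma approximable_homogeneous_quotient:
  assumes f: "pos_homogeneous f" "set_integrable lebesgue X f"
  shows "approximable (\<lambda>x. indicator X x * f x / l1norm x)"
proof (rule approximable_if_scale_invariant)
  have "(\<lambda>x. indicator X x *\<^sub>R f x) \<in> borel_measurable lebesgue"
    using f(2) unfolding set_integrable_def by (rule borel_measurable_integrable)
  then show "(\<lambda>x. indicator X x * f x / l1norm x) \<in> borel_measurable lebesgue"
    using borel_measurable_l1norm by (auto intro!: borel_measurable_divide)
  have "cone_weight X x * \<bar>indicator X x * f x / l1norm x\<bar> = \<bar>indicator X x *\<^sub>R f x\<bar>" for x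
    using l1norm_pos[of x] pos_homogeneous_zero[OF f(1)]
    by (cases "x = 0") (auto simp: cone_weight_def abs_mult indicator_def)
  then show "integrable lebesgue (\<lambda>x. cone_weight X x * \<bar>indicator X x * f x / l1norm x\<bar>)"
    using f(2) unfolding set_integrable_def by (simp add: integrable_abs)
  show "indicator X (t *\<^sub>R x) * f (t *\<^sub>R x) / l1norm (t *\<^sub>R x) = indicator X x * f x / l1norm x"
    if "x \<in> X" "0 < t" "t *\<^sub>R x \<in> X" for x t
    using that f(1) by (simp add: pos_homogeneous_def l1norm_scaleR)
qed

end

lemma weighted_error_eq:
  assumes "f 0 = 0"
  shows "indicator X x * \<bar>l1norm x * h (l1_normalize x) - f x\<bar> =
    cone_weight X x * \<bar>indicator X x * f x / l1norm x - h (l1_normalize x)\<bar>"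
proof (cases "x \<in> X \<and> x \<noteq> 0")
  case True
  then have "l1norm x * h (l1_normalize x) - f x = l1norm x * (h (l1_normalize x) - f x / l1norm x)"
    using l1norm_pos[of x] by (simp add: field_simps)
  then show ?thesis
    using True l1norm_nonneg[of x] by (simp add: cone_weight_def abs_mult abs_minus_commute)
qed (use assms in \<open>auto simp: cone_weight_def l1norm_def\<close>)

theorem mainTheorem7:
  fixes X :: "(real^'n) set" and f :: "real^'n \<Rightarrow> real" and \<epsilon> :: real
  assumes "X \<in> sets lebesgue" and "compact X"
    and "pos_homogeneous f"
    and "set_integrable lebesgue X f"
    and "\<epsilon> > 0"
  shows "\<exists>N :: 'n relu_net. valid_net N \<and> net_width N \<le> CARD('n) + 4 \<and>
           set_integrable lebesgue X (\<lambda>x. \<bar>l1norm x * net_fun N (x /\<^sub>R l1norm x) - f x\<bar>) \<and>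
           (LINT x:X|lebesgue. \<bar>l1norm x * net_fun N (x /\<^sub>R l1norm x) - f x\<bar>) < \<epsilon>"
proof -
  interpret compact_cone_domain X
    using assms(1,2) by unfold_locales
  obtain g where g: "g \<in> normalized_bump_combs"
    "integrable lebesgue (\<lambda>x. cone_weight X x * \<bar>indicator X x * f x / l1norm x - g x\<bar>)"
    "(\<integral>x. cone_weight X x * \<bar>indicator X x * f x / l1norm x - g x\<bar> \<partial>lebesgue) < \<epsilon>"
    using approximable_homogeneous_quotient[OF assms(3,4)] assms(5) unfolding approximable_def by blast
  then obtain gs where gs: "g = (\<lambda>x. bump_comb gs (l1_normalize x))"
    by (auto simp: normalized_bump_combs_def)
  have "net_fun (bump_net gs) (l1_normalize x) = bump_comb gs (l1_normalize x)" for x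
    by (intro net_fun_bump_net ballI abs_inner_l1_normalize_le_1)
  then have error_eq: "(\<lambda>x. indicator X x *\<^sub>R \<bar>l1norm x * net_fun (bump_net gs) (x /\<^sub>R l1norm x) - f x\<bar>) =
      (\<lambda>x. cone_weight X x * \<bar>indicator X x * f x / l1norm x - bump_comb gs (l1_normalize x)\<bar>)"
    using weighted_error_eq[where f = f and h = "bump_comb gs", OF pos_homogeneous_zero[OF assms(3)]]
    by (simp add: l1_normalize_def)
  show ?thesis
  proof (intro exI[of _ "bump_net gs"] conjI valid_net_bump_net net_width_bump_net)
    show "set_integrable lebesgue X (\<lambda>x. \<bar>l1norm x * net_fun (bump_net gs) (x /\<^sub>R l1norm x) - f x\<bar>)"
      using g(2) unfolding set_integrable_def error_eq gs .
    show "(LINT x:X|lebesgue. \<bar>l1norm x * net_fun (bump_net gs) (x /\<^sub>R l1norm x) - f x\<bar>) < \<epsilon>"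
      using g(3) unfolding set_lebesgue_integral_def error_eq gs .
  qed
qed

end
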